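(* Let $B(x)=\frac{x}{1+x^2}$, $B_0(x)=x$ and $B_j(x)=B(B_{j-1}(x))$ for $j\ge1$. For $j\ge0$, let $x_j\in\mathbb{C}$ be any root of $B_j(x)=-1$. Then $\Re(x_j)<0$. *)

theory Defs
  imports Complex_Main
begin

definition B :: "complex \<Rightarrow> complex" where
  "B x = x / (1 + x\<^sup>2)"

fun Bj :: "nat \<Rightarrow> complex \<Rightarrow> complex" where
  "Bj 0 x = x"
| "Bj (Suc j) x = B (Bj j x)"

end

theory Submission
  imports Defs
begin

text \<open>The real part of \<open>B y\<close> is \<open>Re y\<close> times a nonnegative factor, which is positive
  unless \<open>y\<close> is one of the poles \<open>\<plusminus>\<i>\<close> on the imaginary axis. Hence \<open>Re (B y) < 0\<close> iff
  \<open>Re y < 0\<close>, the same holds for every iterate \<open>Bj j\<close>, and \<open>Re (-1) < 0\<close>.\<close>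

lemma Re_B: "Re (B y) = Re y * (1 + (cmod y)\<^sup>2) / (cmod (1 + y\<^sup>2))\<^sup>2"
proof -
  have "Re y * Re (1 + y\<^sup>2) + Im y * Im (1 + y\<^sup>2) = Re y * (1 + (cmod y)\<^sup>2)"
    unfolding cmod_power2 by (simp add: power2_eq_square algebra_simps)
  then show ?thesis
    by (simp add: B_def Re_divide cmod_power2)
qed

lemma Re_B_neg_iff: "Re (B y) < 0 \<longleftrightarrow> Re y < 0"
proof
  assume "Re (B y) < 0"
  show "Re y < 0"
  proof (rule ccontr)
    assume "\<not> Re y < 0"
    then have "Re (B y) \<ge> 0"
      unfolding Re_B by simp
    with \<open>Re (B y) < 0\<close> show False
      by simp
  qed
next
  assume neg: "Re y < 0"
  have "1 + y\<^sup>2 \<noteq> 0"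
  proof
    assume "1 + y\<^sup>2 = 0"
    then have "y\<^sup>2 = -1"
      by (simp add: add_eq_0_iff)
    then have "Re (y\<^sup>2) = -1" and "Im (y\<^sup>2) = 0"
      by simp_all
    then have re_sq: "(Re y)\<^sup>2 - (Im y)\<^sup>2 = -1" and "2 * Re y * Im y = 0"
      unfolding Re_power2 Im_power2 .
    with neg have "Im y = 0"
      by simp
    with re_sq show False
      using zero_le_power2[of "Re y"] by simp
  qed
  with neg show "Re (B y) < 0"
    unfolding Re_B by (simp add: divide_neg_pos mult_neg_pos add_pos_nonneg)
qed

lemma Re_Bj_neg_iff: "Re (Bj j x) < 0 \<longleftrightarrow> Re x < 0"
  by (induction j) (simp_all add: Re_B_neg_iff)

theorem proposition2p7:
  fixes j :: nat and x :: complex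
  assumes "Bj j x = -1"
  shows "Re x < 0"
  using Re_Bj_neg_iff[of j x] assms by simp

end
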